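(* Let $d\ge 1$ and $h\ge 1$ be integers, let $T$ be the complete $d$-ary tree of height $h$, and let $u,v$ be vertices of $T$ with least common ancestor $c$. Let $u'$, $v'$, $c'$ be the distances of $u$, $v$, $c$ respectively from the root. Then the hitting time from $u$ to $v$ is \[f_{h-c'}(d)-f_{h-u'}(d)+g_{h,v'}(d)-g_{h,c'}(d).\]
   Context: The complete $d$-ary tree of height $h$ is the rooted tree in which every vertex at depth less than $h$ has exactly $d$ children and every vertex at depth $h$ is a leaf. For nonnegative integers $n$, $f_0(d)=0$ and for $n\ge1$, $f_n(d)=\left(\sum_{i=0}^{n-1}(2n-2i)d^i\right)-n$. For a positive integer $k$ and nonnegative integer $m$, $g_{k,0}(d)=0$ and for $m\ge1$, $g_{k,m}(d)=\left(\sum_{i=0}^{m-1}(2m-2i)d^{k-i}\right)-m$. A simple random walk moves at each step to a uniformly random neighbor; the hitting time from $x$ to $y$ is the expected number of steps for a simple random walk started at $x$ to first reach $y$. *)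

theory Defs
  imports "HOL-Analysis.Analysis"
begin

definition f_poly :: "nat \<Rightarrow> real \<Rightarrow> real" where
  "f_poly n d = (if n = 0 then 0
     else (\<Sum>i<n. (2 * real n - 2 * real i) * d ^ i) - real n)"

definition g_poly :: "nat \<Rightarrow> nat \<Rightarrow> real \<Rightarrow> real" where
  "g_poly k m d = (if m = 0 then 0
     else (\<Sum>i<m. (2 * real m - 2 * real i) * d ^ (k - i)) - real m)"

text \<open>Complete d-ary tree of height h: vertices are words over {0..<d} of length
  at most h; the root is the empty word; the parent of a nonempty word is its
  butlast; the depth (distance from the root) is the length.\<close>
definition tree_vertices :: "nat \<Rightarrow> nat \<Rightarrow> nat list set" where
  "tree_vertices d h = {xs. length xs \<le> h \<and> set xs \<subseteq> {..<d}}"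

definition tree_adj :: "nat list \<Rightarrow> nat list \<Rightarrow> bool" where
  "tree_adj x y \<longleftrightarrow> (x \<noteq> [] \<and> y = butlast x) \<or> (y \<noteq> [] \<and> x = butlast y)"

definition tree_nbrs :: "nat \<Rightarrow> nat \<Rightarrow> nat list \<Rightarrow> nat list set" where
  "tree_nbrs d h x = {y \<in> tree_vertices d h. tree_adj x y}"

text \<open>Least common ancestor = longest common prefix.\<close>
fun lca :: "nat list \<Rightarrow> nat list \<Rightarrow> nat list" where
  "lca (a # xs) (b # ys) = (if a = b then a # lca xs ys else [])"
| "lca _ _ = []"

text \<open>First-passage probabilities of the simple random walk: the probability
  that the walk started at x first reaches y at exactly step n.\<close>
fun first_hit_prob :: "nat \<Rightarrow> nat \<Rightarrow> nat list \<Rightarrow> nat \<Rightarrow> nat list \<Rightarrow> real" where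
  "first_hit_prob d h y 0 x = (if x = y then 1 else 0)"
| "first_hit_prob d h y (Suc n) x = (if x = y then 0 else
     (\<Sum>z\<in>tree_nbrs d h x. first_hit_prob d h y n z / real (card (tree_nbrs d h x))))"

text \<open>Hitting time = expectation of the first-passage time T (in [0,\<infinity>]):
  sum of n P(T=n), plus \<infinity> if T = \<infinity> with positive probability.\<close>
definition hitting_time :: "nat \<Rightarrow> nat \<Rightarrow> nat list \<Rightarrow> nat list \<Rightarrow> ennreal" where
  "hitting_time d h x y =
     (\<Sum>n. ennreal (real n * first_hit_prob d h y n x)) +
     (if (\<Sum>n. ennreal (first_hit_prob d h y n x)) < 1 then \<infinity> else 0)"

end

(*
  The candidate F x = f(h - |lca x v|) - f(h - |x|) + g(h, |v|) - g(h, |lca x v|) vanishes at v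
  and satisfies the first-step equations F x = 1 + (average of F over the neighbours of x) for
  x \<noteq> v: if x is not an ancestor of v, moving to a neighbour only changes the depth term;
  if it is, the child towards v moves the lca one level down while the other children keep it.
  Either way the equation reduces to the difference recurrences of f and g.

  On a finite graph every such solution is the expected hitting time of v. Writing Q n x for the
  probability that the walk from x has not reached v within n steps, F x - (\<Sum>k<n. Q k x) is
  the average of F over the walk's position at time n on that event, hence bounded by
  max |F| * Q n x. So (\<Sum>k<n. Q k x) is bounded, Q k x tends to 0, the walk hits v almost
  surely and \<Sum>k. Q k x = F x, which is the expected hitting time by the tail-sum formula.
*)

theory Submission
  imports Defs
begin

lemma f_poly_eq: "f_poly n d = (\<Sum>i<n. (2 * real n - 2 * real i) * d ^ i) - real n"
  by (simp add: f_poly_def)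

lemma g_poly_eq: "g_poly k m d = (\<Sum>i<m. (2 * real m - 2 * real i) * d ^ (k - i)) - real m"
  by (simp add: g_poly_def)

lemma f_poly_Suc_diff: "f_poly (Suc n) d - f_poly n d = 2 * (\<Sum>i<Suc n. d ^ i) - 1"
  by (simp add: f_poly_eq sum.distrib[symmetric] sum_distrib_left algebra_simps)

lemma g_poly_Suc_diff: "g_poly k (Suc m) d - g_poly k m d = 2 * (\<Sum>i<Suc m. d ^ (k - i)) - 1"
  by (simp add: g_poly_eq sum.distrib[symmetric] sum_distrib_left algebra_simps)

lemma f_poly_second_diff:
  "f_poly (Suc (Suc n)) d - f_poly (Suc n) d = d * (f_poly (Suc n) d - f_poly n d) + d + 1"
  unfolding f_poly_Suc_diff
  by (subst (1) sum.lessThan_Suc_shift) (simp add: sum_distrib_left algebra_simps del: sum.lessThan_Suc)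

lemma f_poly_diff_geometric: "(d - 1) * (f_poly (Suc n) d - f_poly n d) = 2 * d ^ Suc n - d - 1"
proof -
  have "(d - 1) * (\<Sum>i<Suc n. d ^ i) = d ^ Suc n - 1"
    using power_diff_1_eq[of d "Suc n"] by simp
  then show ?thesis unfolding f_poly_Suc_diff by (simp add: algebra_simps)
qed

lemma g_poly_second_diff:
  "g_poly k (Suc (Suc m)) d - g_poly k (Suc m) d = g_poly k (Suc m) d - g_poly k m d + 2 * d ^ (k - Suc m)"
  unfolding g_poly_Suc_diff by simp

lemma f_poly_0 [simp]: "f_poly 0 d = 0" and g_poly_0 [simp]: "g_poly k 0 d = 0"
  by (simp_all add: f_poly_def g_poly_def)

lemma
  fixes p :: "nat \<Rightarrow> real"
  assumes p_nonneg: "\<And>n. 0 \<le> p n" and mass_le_1: "\<And>n. (\<Sum>k\<le>n. p k) \<le> 1"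
    and tails: "(\<lambda>n. 1 - (\<Sum>k\<le>n. p k)) sums S"
  shows sums_one_of_tail_sums: "p sums 1"
    and sums_mean_of_tail_sums: "(\<lambda>n. real n * p n) sums S"
proof -
  define Q where "Q = (\<lambda>n. 1 - (\<Sum>k\<le>n. p k))"
  have "Q sums S"
    using tails by (simp add: Q_def)
  then have "summable Q" and S_eq: "S = suminf Q"
    by (simp_all add: sums_iff)
  have Q_nonneg: "0 \<le> Q n" for n
    using mass_le_1 by (simp add: Q_def)
  have Q_antimono: "Q n \<le> Q m" if "m \<le> n" for m n
    unfolding Q_def using that p_nonneg by (simp add: sum_mono2)
  have "Q \<longlonglongrightarrow> 0"
    using \<open>summable Q\<close> by (rule summable_LIMSEQ_zero)
  then have "(\<lambda>n. \<Sum>k<Suc n. p k) \<longlonglongrightarrow> 1"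
    using tendsto_diff[OF tendsto_const[of 1] \<open>Q \<longlonglongrightarrow> 0\<close>] by (simp add: Q_def lessThan_Suc_atMost)
  then show "p sums 1"
    unfolding sums_def by (rule LIMSEQ_imp_Suc)
  have mean_eq: "(\<Sum>j\<le>n. real j * p j) = (\<Sum>k\<le>n. Q k - Q n)" for n
  proof (induction n)
    case (Suc n)
    have "Q n - Q (Suc n) = p (Suc n)"
      by (simp add: Q_def)
    then have "(\<Sum>k\<le>Suc n. Q k - Q (Suc n)) = (\<Sum>k\<le>n. Q k - Q n) + real (Suc n) * p (Suc n)"
      by (simp add: sum.distrib sum_subtractf algebra_simps)
    then show ?case
      using Suc by simp
  qed simp
  have mean_le: "(\<Sum>j\<le>n. real j * p j) \<le> S" for n
  proof -
    have "(\<Sum>j\<le>n. real j * p j) \<le> (\<Sum>k\<le>n. Q k)"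
      unfolding mean_eq by (intro sum_mono) (simp add: Q_nonneg)
    also have "\<dots> \<le> S"
      unfolding S_eq using \<open>summable Q\<close> Q_nonneg
      by (intro sum_le_suminf) auto
    finally show ?thesis .
  qed
  have partial_mean_le: "(\<Sum>j<n. real j * p j) \<le> S" for n
  proof -
    have "(\<Sum>j<n. real j * p j) \<le> (\<Sum>j\<le>n. real j * p j)"
      using p_nonneg by (intro sum_mono2) auto
    then show ?thesis
      using mean_le by (rule order_trans)
  qed
  have mean_summable: "summable (\<lambda>j. real j * p j)"
    using p_nonneg partial_mean_le by (intro summableI_nonneg_bounded) auto
  have "(\<Sum>k<K. Q k) \<le> (\<Sum>j. real j * p j)" for K
  proof (rule LIMSEQ_le_const2)
    show "(\<lambda>n. (\<Sum>k<K. Q k) - real K * Q n) \<longlonglongrightarrow> (\<Sum>k<K. Q k)"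
      using tendsto_diff[OF tendsto_const tendsto_mult_right_zero[OF \<open>Q \<longlonglongrightarrow> 0\<close>]] by simp
    have "(\<Sum>k<K. Q k) - real K * Q n \<le> (\<Sum>j. real j * p j)" if "K \<le> n" for n
    proof -
      have "(\<Sum>k<K. Q k) - real K * Q n = (\<Sum>k<K. Q k - Q n)"
        by (simp add: sum_subtractf)
      also have "\<dots> \<le> (\<Sum>k\<le>n. Q k - Q n)"
        using that Q_antimono by (intro sum_mono2) auto
      also have "\<dots> = (\<Sum>j\<le>n. real j * p j)"
        by (rule mean_eq[symmetric])
      also have "\<dots> \<le> (\<Sum>j. real j * p j)"
        using mean_summable p_nonneg by (intro sum_le_suminf) auto
      finally show ?thesis .
    qed
    then show "\<exists>N. \<forall>n\<ge>N. (\<Sum>k<K. Q k) - real K * Q n \<le> (\<Sum>j. real j * p j)"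
      by blast
  qed
  then have "S \<le> (\<Sum>j. real j * p j)"
    using LIMSEQ_le_const2 \<open>Q sums S\<close> unfolding sums_def by blast
  moreover have "(\<Sum>j. real j * p j) \<le> S"
    using mean_summable partial_mean_le by (rule suminf_le_const)
  ultimately show "(\<lambda>n. real n * p n) sums S"
    using mean_summable by (simp add: sums_iff)
qed

fun first_passage :: "('a \<Rightarrow> 'a set) \<Rightarrow> 'a \<Rightarrow> nat \<Rightarrow> 'a \<Rightarrow> real" where
  "first_passage N y 0 x = (if x = y then 1 else 0)"
| "first_passage N y (Suc n) x = (if x = y then 0 else
     (\<Sum>z\<in>N x. first_passage N y n z / real (card (N x))))"

fun survival :: "('a \<Rightarrow> 'a set) \<Rightarrow> 'a \<Rightarrow> nat \<Rightarrow> 'a \<Rightarrow> real" where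
  "survival N y 0 x = (if x = y then 0 else 1)"
| "survival N y (Suc n) x = (if x = y then 0 else
     (\<Sum>z\<in>N x. survival N y n z / real (card (N x))))"

lemma first_passage_nonneg: "0 \<le> first_passage N y n x"
  by (induction n arbitrary: x) (auto intro!: sum_nonneg divide_nonneg_nonneg)

lemma survival_nonneg: "0 \<le> survival N y n x"
  by (induction n arbitrary: x) (auto intro!: sum_nonneg divide_nonneg_nonneg)

lemma survival_target [simp]: "survival N y n y = 0"
  by (cases n) simp_all

locale finite_walk =
  fixes V :: "'a set" and N :: "'a \<Rightarrow> 'a set"
  assumes finite_vertices: "finite V"
    and nbrs_subset: "\<And>x. x \<in> V \<Longrightarrow> N x \<subseteq> V"
    and nbrs_nonempty: "\<And>x. x \<in> V \<Longrightarrow> N x \<noteq> {}"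
begin

lemma average_nbrs_const: "x \<in> V \<Longrightarrow> (\<Sum>z\<in>N x. c / real (card (N x))) = c"
  using nbrs_nonempty[of x] finite_subset[OF nbrs_subset finite_vertices] by simp

lemma first_passage_sum_add_survival:
  "x \<in> V \<Longrightarrow> (\<Sum>k\<le>n. first_passage N y k x) + survival N y n x = 1"
proof (induction n arbitrary: x)
  case (Suc n)
  show ?case
  proof (cases "x = y")
    case False
    have "(\<Sum>k\<le>Suc n. first_passage N y k x) + survival N y (Suc n) x
        = (\<Sum>z\<in>N x. ((\<Sum>k\<le>n. first_passage N y k z) + survival N y n z) / real (card (N x)))"
      using False
      by (simp add: sum.atMost_Suc_shift sum.swap[of _ "N x"] sum_divide_distrib[symmetric]
          add_divide_distrib sum.distrib del: sum.atMost_Suc)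
    also have "\<dots> = 1"
      using Suc nbrs_subset average_nbrs_const by (simp add: subset_iff)
    finally show ?thesis .
  qed (simp add: sum.atMost_Suc_shift del: sum.atMost_Suc)
qed simp

end

locale hitting_time_system = finite_walk +
  fixes y :: 'a and F :: "'a \<Rightarrow> real"
  assumes F_target: "F y = 0"
    and F_step: "\<And>x. x \<in> V \<Longrightarrow> x \<noteq> y \<Longrightarrow> F x = 1 + (\<Sum>z\<in>N x. F z / real (card (N x)))"
begin

lemma survival_partial_sums_approx:
  assumes F_bound: "\<And>x. x \<in> V \<Longrightarrow> \<bar>F x\<bar> \<le> M"
  shows "x \<in> V \<Longrightarrow> \<bar>F x - (\<Sum>k<n. survival N y k x)\<bar> \<le> M * survival N y n x"
proof (induction n arbitrary: x)
  case 0
  then show ?case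
    using F_bound F_target by simp
next
  case (Suc n)
  show ?case
  proof (cases "x = y")
    case False
    let ?avg = "\<lambda>\<phi>. \<Sum>z\<in>N x. \<phi> z / real (card (N x))"
    have "F x - (\<Sum>k<Suc n. survival N y k x) = ?avg (\<lambda>z. F z - (\<Sum>k<n. survival N y k z))"
      using False F_step[OF Suc.prems False]
      by (simp add: sum.lessThan_Suc_shift sum.swap[of _ "N x"] sum_subtractf diff_divide_distrib
          sum_divide_distrib
          del: sum.lessThan_Suc)
    also have "\<bar>\<dots>\<bar> \<le> ?avg (\<lambda>z. \<bar>F z - (\<Sum>k<n. survival N y k z)\<bar>)"
      by (rule order_trans[OF sum_abs]) simp
    also have "\<dots> \<le> ?avg (\<lambda>z. M * survival N y n z)"
      using Suc.IH nbrs_subset[OF Suc.prems] by (intro sum_mono divide_right_mono) auto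
    also have "\<dots> = M * survival N y (Suc n) x"
      using False by (simp add: sum_distrib_left)
    finally show ?thesis .
  qed (simp add: F_target)
qed

theorem
  assumes "u \<in> V"
  shows first_passage_sums_one: "(\<lambda>n. first_passage N y n u) sums 1"
    and first_passage_mean_sums: "(\<lambda>n. real n * first_passage N y n u) sums F u"
proof -
  let ?p = "\<lambda>n. first_passage N y n u" and ?Q = "\<lambda>n. survival N y n u"
  define M where "M = (\<Sum>x\<in>V. \<bar>F x\<bar>)"
  have "\<bar>F x\<bar> \<le> M" if "x \<in> V" for x
    unfolding M_def using that finite_vertices by (intro member_le_sum) auto
  then have approx: "\<bar>F u - (\<Sum>k<n. ?Q k)\<bar> \<le> M * ?Q n" for n
    using \<open>u \<in> V\<close> by (rule survival_partial_sums_approx)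
  have Q_eq: "?Q n = 1 - (\<Sum>k\<le>n. ?p k)" for n
    using first_passage_sum_add_survival[OF \<open>u \<in> V\<close>, of y n] by simp
  have mass_nonneg: "0 \<le> (\<Sum>k\<le>n. ?p k)" for n
    by (intro sum_nonneg first_passage_nonneg)
  have "0 \<le> M"
    unfolding M_def by (intro sum_nonneg abs_ge_zero)
  have approx_le_M: "M * ?Q n \<le> M" for n
    using Q_eq[of n] mass_nonneg[of n] \<open>0 \<le> M\<close> by (intro mult_left_le) linarith+
  have "(\<Sum>k<n. ?Q k) \<le> F u + M" for n
    using approx[of n] approx_le_M[of n] by linarith
  then have "summable ?Q"
    by (rule summableI_nonneg_bounded[OF survival_nonneg])
  then have "(\<lambda>n. M * ?Q n) \<longlonglongrightarrow> 0"
    by (intro tendsto_mult_right_zero summable_LIMSEQ_zero)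
  with approx have "(\<lambda>n. F u - (\<Sum>k<n. ?Q k)) \<longlonglongrightarrow> 0"
    by (metis (no_types, lifting) Lim_null_comparison always_eventually real_norm_def)
  from tendsto_diff[OF tendsto_const[of "F u"] this] have "?Q sums F u"
    unfolding sums_def by simp
  then have tails: "(\<lambda>n. 1 - (\<Sum>k\<le>n. ?p k)) sums F u"
    by (simp add: Q_eq)
  have mass_le_1: "(\<Sum>k\<le>n. ?p k) \<le> 1" for n
    using Q_eq[of n] survival_nonneg[of N y n u] by linarith
  show "?p sums 1"
    using sums_one_of_tail_sums[OF first_passage_nonneg mass_le_1 tails] .
  show "(\<lambda>n. real n * ?p n) sums F u"
    using sums_mean_of_tail_sums[OF first_passage_nonneg mass_le_1 tails] .
qed

end

lemma lca_self [simp]: "lca x x = x"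
  by (induction x) auto

lemma take_length_lca: "take (length (lca x v)) v = lca x v"
  by (induction x v rule: lca.induct) auto

lemma lca_snoc:
  "lca (x @ [i]) v = (if lca x v = x \<and> length x < length v \<and> v ! length x = i then x @ [i] else lca x v)"
proof (induction x arbitrary: v)
  case Nil
  then show ?case by (cases v) auto
next
  case (Cons a x)
  then show ?case by (cases v) auto
qed

lemma lca_butlast: "lca (butlast x) v = (if lca x v = x then butlast x else lca x v)"
proof (induction x arbitrary: v)
  case Nil
  then show ?case by simp
next
  case (Cons a x)
  then show ?case by (cases v; cases x) auto
qed

lemma tree_nbrs_eq:
  assumes "x \<in> tree_vertices d h"
  shows "tree_nbrs d h x = (if x = [] then {} else {butlast x}) \<union>
     (if length x < h then (\<lambda>i. x @ [i]) ` {..<d} else {})"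
proof -
  have "tree_adj x y \<longleftrightarrow> (x \<noteq> [] \<and> y = butlast x) \<or> (\<exists>i. y = x @ [i])" for y
    unfolding tree_adj_def by (metis append_butlast_last_id butlast_snoc snoc_eq_iff_butlast)
  with assms show ?thesis
    unfolding tree_nbrs_def tree_vertices_def by (auto dest: in_set_butlastD)
qed

lemma
  assumes "x \<in> tree_vertices d h"
  shows sum_tree_nbrs: "(\<Sum>z\<in>tree_nbrs d h x. \<phi> z) = (if x = [] then 0 else \<phi> (butlast x)) +
      (if length x < h then (\<Sum>i<d. \<phi> (x @ [i])) else 0)"
    and card_tree_nbrs: "card (tree_nbrs d h x) = (if x = [] then 0 else 1) + (if length x < h then d else 0)"
proof -
  have inj: "inj_on (\<lambda>i. x @ [i]) {..<d}" by (auto simp: inj_on_def)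
  have disj: "(if x = [] then {} else {butlast x}) \<inter> (if length x < h then (\<lambda>i. x @ [i]) ` {..<d} else {}) = {}"
    by (auto dest: arg_cong[where f = length])
  show "(\<Sum>z\<in>tree_nbrs d h x. \<phi> z) = (if x = [] then 0 else \<phi> (butlast x)) +
      (if length x < h then (\<Sum>i<d. \<phi> (x @ [i])) else 0)"
    unfolding tree_nbrs_eq[OF assms] using disj
    by (subst sum.union_disjoint) (auto simp: sum.reindex[OF inj])
  show "card (tree_nbrs d h x) = (if x = [] then 0 else 1) + (if length x < h then d else 0)"
    unfolding tree_nbrs_eq[OF assms] using disj
    by (subst card_Un_disjoint) (auto simp: card_image[OF inj])
qed

definition tree_hitting_formula :: "nat \<Rightarrow> nat \<Rightarrow> nat list \<Rightarrow> nat list \<Rightarrow> real" where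
  "tree_hitting_formula d h v x =
     f_poly (h - length (lca x v)) (real d) - f_poly (h - length x) (real d)
     + g_poly h (length v) (real d) - g_poly h (length (lca x v)) (real d)"

lemma tree_hitting_formula_not_ancestor:
  assumes x: "x \<in> tree_vertices d h" and not_anc: "lca x v \<noteq> x"
  shows "real (card (tree_nbrs d h x)) * (tree_hitting_formula d h v x - 1) =
    (\<Sum>z\<in>tree_nbrs d h x. tree_hitting_formula d h v z)"
proof -
  let ?f = "\<lambda>n. f_poly n (real d)" and ?H = "tree_hitting_formula d h v"
  define K where "K = ?f (h - length (lca x v)) + g_poly h (length v) d - g_poly h (length (lca x v)) d"
  have x_ne: "x \<noteq> []" using not_anc by auto
  then have x_pos: "length x > 0" by simp
  have H_x: "?H x = K - ?f (h - length x)"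
    and H_parent: "?H (butlast x) = K - ?f (h - (length x - 1))"
    and H_child: "?H (x @ [i]) = K - ?f (h - Suc (length x))" for i
    using not_anc by (simp_all add: tree_hitting_formula_def K_def lca_butlast lca_snoc)
  show ?thesis
  proof (cases "length x < h")
    case False
    then have "h - length x = 0" and "h - (length x - 1) = Suc 0"
      using x x_pos by (auto simp: tree_vertices_def)
    moreover have "?f (Suc 0) = 1"
      using f_poly_Suc_diff[of 0 "real d"] by simp
    ultimately show ?thesis
      using False x_ne H_x H_parent by (simp add: sum_tree_nbrs[OF x] card_tree_nbrs[OF x])
  next
    case True
    then obtain n where n: "h - length x = Suc n"
      by (metis Suc_diff_Suc)
    then have "h - (length x - 1) = Suc (Suc n)" and "h - Suc (length x) = n"
      using x_pos by arith+
    then have "(\<Sum>z\<in>tree_nbrs d h x. ?H z) = (K - ?f (Suc (Suc n))) + d * (K - ?f n)"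
      using True x_ne by (simp add: sum_tree_nbrs[OF x] H_parent H_child)
    moreover have "card (tree_nbrs d h x) = 1 + d"
      using True x_ne by (simp add: card_tree_nbrs[OF x])
    ultimately show ?thesis
      using f_poly_second_diff[of n "real d"] by (simp add: H_x n algebra_simps)
  qed
qed

lemma tree_hitting_formula_proper_ancestor:
  assumes x: "x \<in> tree_vertices d h" and v: "v \<in> tree_vertices d h"
    and anc: "lca x v = x" and "x \<noteq> v"
  shows "real (card (tree_nbrs d h x)) * (tree_hitting_formula d h v x - 1) =
    (\<Sum>z\<in>tree_nbrs d h x. tree_hitting_formula d h v z)"
proof -
  let ?f = "\<lambda>n. f_poly n (real d)" and ?g = "\<lambda>n. g_poly h n (real d)"
    and ?H = "tree_hitting_formula d h v"
  define j where "j = length x"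
  define a where "a = v ! j"
  define G where "G = ?g (length v)"
  have "take j v = x"
    using take_length_lca[of x v] by (simp add: anc j_def)
  then have j_less: "j < length v"
    using \<open>x \<noteq> v\<close> by (metis not_le take_all)
  then have "a < d" and "j < h"
    using v by (auto simp: a_def tree_vertices_def dest!: nth_mem)
  then obtain m where m: "h - j = Suc m" "h - Suc j = m"
    by (metis Suc_diff_Suc)
  have H_x: "?H x = G - ?g j"
    and H_child: "?H (x @ [i]) = (if i = a then G - ?g (Suc j)
        else ?f (Suc m) - ?f m + G - ?g j)" for i
    using anc j_less m by (simp_all add: tree_hitting_formula_def G_def lca_snoc j_def a_def)
  have "(\<Sum>i<d. ?H (x @ [i])) = ?H (x @ [a]) + (\<Sum>i\<in>{..<d} - {a}. ?H (x @ [i]))"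
    using \<open>a < d\<close> by (simp add: sum.remove)
  also have "\<dots> = G - ?g (Suc j) + (real d - 1) * (?f (Suc m) - ?f m + G - ?g j)"
    using \<open>a < d\<close> by (simp add: H_child of_nat_diff)
  finally have children: "(\<Sum>i<d. ?H (x @ [i])) =
      G - ?g (Suc j) + (real d - 1) * (?f (Suc m) - ?f m) + (real d - 1) * (G - ?g j)"
    by (simp add: algebra_simps)
  note f_diff = f_poly_diff_geometric[of "real d" m]
  show ?thesis
  proof (cases j)
    case 0
    then have "x = []" and "h = Suc m"
      using m by (simp_all add: j_def)
    then have "(\<Sum>z\<in>tree_nbrs d h x. ?H z) = (\<Sum>i<d. ?H (x @ [i]))"
      and "card (tree_nbrs d h x) = d"
      using \<open>j < h\<close> sum_tree_nbrs[OF x] card_tree_nbrs[OF x] by simp_all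
    moreover have "?g (Suc 0) = 2 * real d ^ Suc m - 1"
      using g_poly_Suc_diff[of h 0 "real d"] \<open>h = Suc m\<close> by simp
    ultimately show ?thesis
      using children f_diff by (simp add: H_x 0 algebra_simps)
  next
    case (Suc k)
    then have "x \<noteq> []" and "?H (butlast x) = G - ?g k"
      using anc by (auto simp: j_def tree_hitting_formula_def G_def lca_butlast)
    then have "(\<Sum>z\<in>tree_nbrs d h x. ?H z) = G - ?g k + (\<Sum>i<d. ?H (x @ [i]))"
      and "card (tree_nbrs d h x) = 1 + d"
      using \<open>j < h\<close> by (simp_all add: sum_tree_nbrs[OF x] card_tree_nbrs[OF x] j_def)
    moreover have "h - Suc k = Suc m"
      using m Suc by simp
    ultimately show ?thesis
      using children f_diff g_poly_second_diff[of h k "real d"] by (simp add: H_x Suc algebra_simps)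
  qed
qed

lemma finite_tree_vertices: "finite (tree_vertices d h)"
proof (rule finite_subset)
  show "tree_vertices d h \<subseteq> {xs. set xs \<subseteq> {..<d} \<and> length xs \<le> h}"
    unfolding tree_vertices_def by auto
qed (rule finite_lists_length_le; simp)

lemma tree_nbrs_subset: "tree_nbrs d h x \<subseteq> tree_vertices d h"
  unfolding tree_nbrs_def by auto

lemma tree_nbrs_nonempty:
  assumes "d \<ge> 1" and "h \<ge> 1" and "x \<in> tree_vertices d h"
  shows "tree_nbrs d h x \<noteq> {}"
  using assms by (auto simp: tree_nbrs_eq lessThan_empty_iff)

lemma tree_finite_walk:
  assumes "d \<ge> 1" and "h \<ge> 1"
  shows "finite_walk (tree_vertices d h) (tree_nbrs d h)"
  using assms by unfold_locales (auto simp: finite_tree_vertices tree_nbrs_subset tree_nbrs_nonempty)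

lemma first_hit_prob_eq_first_passage: "first_hit_prob d h y n x = first_passage (tree_nbrs d h) y n x"
  by (induction n arbitrary: x) simp_all

lemma tree_hitting_formula_target: "tree_hitting_formula d h v v = 0"
  by (simp add: tree_hitting_formula_def)

lemma tree_hitting_formula_step:
  assumes "d \<ge> 1" and "h \<ge> 1" and v: "v \<in> tree_vertices d h"
  shows "x \<in> tree_vertices d h \<Longrightarrow> x \<noteq> v \<Longrightarrow> tree_hitting_formula d h v x =
    1 + (\<Sum>z\<in>tree_nbrs d h x. tree_hitting_formula d h v z / real (card (tree_nbrs d h x)))"
proof -
  assume x: "x \<in> tree_vertices d h" and "x \<noteq> v"
  have "card (tree_nbrs d h x) > 0"
    using tree_nbrs_nonempty[OF assms(1,2) x] finite_subset[OF tree_nbrs_subset finite_tree_vertices]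
    by (simp add: card_gt_0_iff)
  moreover have "real (card (tree_nbrs d h x)) * (tree_hitting_formula d h v x - 1) =
      (\<Sum>z\<in>tree_nbrs d h x. tree_hitting_formula d h v z)"
    using tree_hitting_formula_not_ancestor[OF x] tree_hitting_formula_proper_ancestor[OF x v _ \<open>x \<noteq> v\<close>]
    by blast
  ultimately show ?thesis
    by (simp add: sum_divide_distrib[symmetric] field_simps)
qed

theorem mainTheorem9:
  fixes d h :: nat and u v :: "nat list"
  assumes "d \<ge> 1" and "h \<ge> 1"
    and "u \<in> tree_vertices d h" and "v \<in> tree_vertices d h"
  shows "hitting_time d h u v =
    ennreal (f_poly (h - length (lca u v)) (real d) - f_poly (h - length u) (real d)
           + g_poly h (length v) (real d) - g_poly h (length (lca u v)) (real d))"
proof -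
  interpret hitting_time_system "tree_vertices d h" "tree_nbrs d h" v "tree_hitting_formula d h v"
    by (intro hitting_time_system.intro hitting_time_system_axioms.intro tree_finite_walk assms
        tree_hitting_formula_target tree_hitting_formula_step[OF assms(1,2,4)])
  let ?p = "\<lambda>n. first_passage (tree_nbrs d h) v n u"
  have "(\<Sum>n. ennreal (?p n)) = 1"
    using suminf_ennreal_eq[OF first_passage_nonneg first_passage_sums_one[OF assms(3)]]
    by simp
  moreover have "(\<Sum>n. ennreal (real n * ?p n)) = ennreal (tree_hitting_formula d h v u)"
    using first_passage_mean_sums[OF assms(3)]
    by (rule suminf_ennreal_eq[rotated]) (simp add: first_passage_nonneg)
  ultimately show ?thesis
    by (simp add: hitting_time_def first_hit_prob_eq_first_passage tree_hitting_formula_def)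
qed

end
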